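(* Let $(A,\cdot,[\,,\,],\varepsilon)$ be an $F$-manifold color algebra and let $(V,\rho,\mu)$ be a representation of $A$. On the $G$-graded vector space $A\oplus V$ (with $(A\oplus V)_g=A_g\oplus V_g$) define, for homogeneous $x_1+v_1,\,x_2+v_2$ (with $x_i,v_i$ of the same degree as $x_i+v_i$), $$[x_1+v_1,x_2+v_2]_\rho=[x_1,x_2]+\rho(x_1)v_2-\varepsilon(x_1,x_2)\rho(x_2)v_1,$$ $$(x_1+v_1)\cdot_\mu(x_2+v_2)=x_1\cdot x_2+\mu(x_1)v_2+\varepsilon(x_1,x_2)\mu(x_2)v_1,$$ extended bilinearly. Then $(A\oplus V,\cdot_\mu,[\,,\,]_\rho,\varepsilon)$ is an $F$-manifold color algebra.
   Context: $G$ is an abelian group and $\varepsilon:G\times G\to\mathbb K\setminus\{0\}$ is a skew-symmetric bicharacter: $\varepsilon(a,b)\varepsilon(b,a)=1$, $\varepsilon(a,b+c)=\varepsilon(a,b)\varepsilon(a,c)$, $\varepsilon(a+b,c)=\varepsilon(a,c)\varepsilon(b,c)$; $\mathbb K$ is an algebraically closed field of characteristic zero and all spaces are finite-dimensional. For homogeneous elements $x\in A_a,y\in A_b$ one writes $\varepsilon(x,y)$ for $\varepsilon(a,b)$, $\varepsilon(x,y+z)$ for $\varepsilon(a,b+c)$, etc. An $\varepsilon$-commutative associative algebra is a $G$-graded associative algebra $(A,\cdot)$ with $A_a\cdot A_b\subseteq A_{a+b}$ and $x\cdot y=\varepsilon(x,y)y\cdot x$ for homogeneous $x,y$. A Lie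 color algebra is a $G$-graded space $A$ with bilinear $[\,,\,]$ such that $[A_a,A_b]\subseteq A_{a+b}$, $[x,y]=-\varepsilon(x,y)[y,x]$, and $\varepsilon(z,x)[x,[y,z]]+\varepsilon(y,z)[z,[x,y]]+\varepsilon(x,y)[y,[z,x]]=0$ for homogeneous $x,y,z$. An $F$-manifold color algebra is $(A,\cdot,[\,,\,],\varepsilon)$ where $(A,\cdot,\varepsilon)$ is an $\varepsilon$-commutative associative algebra and $(A,[\,,\,],\varepsilon)$ is a Lie color algebra such that for all homogeneous $x,y,z,w$: $P_{x\cdot y}(z,w)=x\cdot P_y(z,w)+\varepsilon(x,y)y\cdot P_x(z,w)$, where $P_x(y,z)=[x,y\cdot z]-[x,y]\cdot z-\varepsilon(x,y)y\cdot[x,z]$. For a $G$-graded space $V$, a representation of the $\varepsilon$-commutative associative algebra $(A,\cdot,\varepsilon)$ is a linear map $\mu:A\to\mathfrak{gl}(V)$ with $\mu(x)V_a\subseteq V_{a+b}$ for $x\in A_b$ and $\mu(x\cdot y)=\mu(x)\mu(y)$; a representation of the Lie color algebra is a linear $\rho:A\to\mathfrak{gl}(V)$ with $\rho(x)V_a\subseteq V_{a+b}$ for $x\in A_b$ and $\rho([x,y])=\rho(x)\rho(y)-\varepsilon(x,y)\rho(y)\rho(x)$. A representation of the $F$-manifold color algebra $A$ is a triple $(V,\rho,\mu)$ where $\rho$ is a representation of the Lie color algebra, $\mu$ a representation of the $\varepsilon$-commutative associative algebra, and for all homogeneous $x_1,x_2,x_3$: $R(x_1\cdot x_2,x_3)=\mu(x_1)R(x_2,x_3)+\varepsilon(x_1,x_2)\mu(x_2)R(x_1,x_3)$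 and $\mu(P_{x_1}(x_2,x_3))=\varepsilon(x_1,x_2+x_3)S(x_2,x_3)\mu(x_1)-\mu(x_1)S(x_2,x_3)$, where $R(x_1,x_2)=\rho(x_1)\mu(x_2)-\varepsilon(x_1,x_2)\mu(x_2)\rho(x_1)-\mu([x_1,x_2])$ and $S(x_1,x_2)=\mu(x_1)\rho(x_2)+\varepsilon(x_1,x_2)\mu(x_2)\rho(x_1)-\rho(x_1\cdot x_2)$. *)

theory Defs
  imports Main "HOL-Library.Product_Plus" "HOL-Computational_Algebra.Polynomial"
begin

definition alg_closed_field :: "'k::field itself \<Rightarrow> bool" where
  "alg_closed_field T \<longleftrightarrow> (\<forall>p::'k poly. 0 < degree p \<longrightarrow> (\<exists>x. poly p x = 0))"

definition skew_bichar :: "('g::ab_group_add \<Rightarrow> 'g \<Rightarrow> 'k::field) \<Rightarrow> bool" where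
  "skew_bichar eps \<longleftrightarrow>
     (\<forall>a b. eps a b \<noteq> 0) \<and>
     (\<forall>a b. eps a b * eps b a = 1) \<and>
     (\<forall>a b c. eps a (b + c) = eps a b * eps a c) \<and>
     (\<forall>a b c. eps (a + b) c = eps a c * eps b c)"

definition is_decomp :: "('g \<Rightarrow> 'v::ab_group_add set) \<Rightarrow> 'v \<Rightarrow> ('g \<Rightarrow> 'v) \<Rightarrow> bool" where
  "is_decomp Vg x f \<longleftrightarrow> finite {g. f g \<noteq> 0} \<and> (\<forall>g. f g \<in> Vg g) \<and> x = sum f {g. f g \<noteq> 0}"

definition graded_vs :: "('k::field \<Rightarrow> 'v::ab_group_add \<Rightarrow> 'v) \<Rightarrow> ('g \<Rightarrow> 'v set) \<Rightarrow> bool" where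
  "graded_vs sc Vg \<longleftrightarrow> vector_space sc \<and> (\<forall>g. module.subspace sc (Vg g)) \<and>
     (\<forall>x. \<exists>!f. is_decomp Vg x f)"

definition fin_dim :: "('k::field \<Rightarrow> 'v::ab_group_add \<Rightarrow> 'v) \<Rightarrow> bool" where
  "fin_dim sc \<longleftrightarrow> (\<exists>B. finite B \<and> module.span sc B = UNIV)"

definition hcomp :: "('g \<Rightarrow> 'v::ab_group_add set) \<Rightarrow> 'v \<Rightarrow> 'g \<Rightarrow> 'v" where
  "hcomp Vg x = (THE f. is_decomp Vg x f)"

definition hsupp :: "('g \<Rightarrow> 'v::ab_group_add set) \<Rightarrow> 'v \<Rightarrow> 'g set" where
  "hsupp Vg x = {g. hcomp Vg x g \<noteq> 0}"

definition bilinear_op :: "('k::field \<Rightarrow> 'a::ab_group_add \<Rightarrow> 'a) \<Rightarrow> ('a \<Rightarrow> 'a \<Rightarrow> 'a) \<Rightarrow> bool" where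
  "bilinear_op sc m \<longleftrightarrow> (\<forall>x. Vector_Spaces.linear sc sc (m x)) \<and> (\<forall>y. Vector_Spaces.linear sc sc (\<lambda>x. m x y))"

definition graded_op :: "('g::ab_group_add \<Rightarrow> 'a set) \<Rightarrow> ('a \<Rightarrow> 'a \<Rightarrow> 'a) \<Rightarrow> bool" where
  "graded_op Ag m \<longleftrightarrow> (\<forall>a b x y. x \<in> Ag a \<longrightarrow> y \<in> Ag b \<longrightarrow> m x y \<in> Ag (a + b))"

definition eps_comm_assoc ::
  "('k::field \<Rightarrow> 'a::ab_group_add \<Rightarrow> 'a) \<Rightarrow> ('g::ab_group_add \<Rightarrow> 'a set) \<Rightarrow> ('g \<Rightarrow> 'g \<Rightarrow> 'k)
   \<Rightarrow> ('a \<Rightarrow> 'a \<Rightarrow> 'a) \<Rightarrow> bool" where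
  "eps_comm_assoc sc Ag eps m \<longleftrightarrow> graded_vs sc Ag \<and> bilinear_op sc m \<and> graded_op Ag m \<and>
     (\<forall>x y z. m (m x y) z = m x (m y z)) \<and>
     (\<forall>a b x y. x \<in> Ag a \<longrightarrow> y \<in> Ag b \<longrightarrow> m x y = sc (eps a b) (m y x))"

definition lie_color ::
  "('k::field \<Rightarrow> 'a::ab_group_add \<Rightarrow> 'a) \<Rightarrow> ('g::ab_group_add \<Rightarrow> 'a set) \<Rightarrow> ('g \<Rightarrow> 'g \<Rightarrow> 'k)
   \<Rightarrow> ('a \<Rightarrow> 'a \<Rightarrow> 'a) \<Rightarrow> bool" where
  "lie_color sc Ag eps br \<longleftrightarrow> graded_vs sc Ag \<and> bilinear_op sc br \<and> graded_op Ag br \<and>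
     (\<forall>a b x y. x \<in> Ag a \<longrightarrow> y \<in> Ag b \<longrightarrow> br x y = - sc (eps a b) (br y x)) \<and>
     (\<forall>a b c x y z. x \<in> Ag a \<longrightarrow> y \<in> Ag b \<longrightarrow> z \<in> Ag c \<longrightarrow>
        sc (eps c a) (br x (br y z)) + sc (eps b c) (br z (br x y)) + sc (eps a b) (br y (br z x)) = 0)"

text \<open>P_x(y,z) = [x, y z] - [x,y] z - eps(x,y) y [x,z], for x of degree a and y of degree b.\<close>
definition Pfun ::
  "('k::field \<Rightarrow> 'a::ab_group_add \<Rightarrow> 'a) \<Rightarrow> ('g \<Rightarrow> 'g \<Rightarrow> 'k) \<Rightarrow> ('a \<Rightarrow> 'a \<Rightarrow> 'a) \<Rightarrow> ('a \<Rightarrow> 'a \<Rightarrow> 'a)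
   \<Rightarrow> 'g \<Rightarrow> 'g \<Rightarrow> 'a \<Rightarrow> 'a \<Rightarrow> 'a \<Rightarrow> 'a" where
  "Pfun sc eps m br a b x y z = br x (m y z) - m (br x y) z - sc (eps a b) (m y (br x z))"

definition F_manifold_color ::
  "('k::field \<Rightarrow> 'a::ab_group_add \<Rightarrow> 'a) \<Rightarrow> ('g::ab_group_add \<Rightarrow> 'a set) \<Rightarrow> ('g \<Rightarrow> 'g \<Rightarrow> 'k)
   \<Rightarrow> ('a \<Rightarrow> 'a \<Rightarrow> 'a) \<Rightarrow> ('a \<Rightarrow> 'a \<Rightarrow> 'a) \<Rightarrow> bool" where
  "F_manifold_color sc Ag eps m br \<longleftrightarrow> eps_comm_assoc sc Ag eps m \<and> lie_color sc Ag eps br \<and>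
     (\<forall>a b c x y z w. x \<in> Ag a \<longrightarrow> y \<in> Ag b \<longrightarrow> z \<in> Ag c \<longrightarrow>
        Pfun sc eps m br (a + b) c (m x y) z w =
          m x (Pfun sc eps m br b c y z w) + sc (eps a b) (m y (Pfun sc eps m br a c x z w)))"

definition graded_action ::
  "('g::ab_group_add \<Rightarrow> 'a set) \<Rightarrow> ('g \<Rightarrow> 'v set) \<Rightarrow> ('a \<Rightarrow> 'v \<Rightarrow> 'v) \<Rightarrow> bool" where
  "graded_action Ag Vg r \<longleftrightarrow> (\<forall>a b x v. x \<in> Ag b \<longrightarrow> v \<in> Vg a \<longrightarrow> r x v \<in> Vg (a + b))"

definition linear_action ::
  "('k::field \<Rightarrow> 'a::ab_group_add \<Rightarrow> 'a) \<Rightarrow> ('k \<Rightarrow> 'v::ab_group_add \<Rightarrow> 'v) \<Rightarrow> ('a \<Rightarrow> 'v \<Rightarrow> 'v) \<Rightarrow> bool" where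
  "linear_action sc scV r \<longleftrightarrow> (\<forall>x. Vector_Spaces.linear scV scV (r x)) \<and>
     (\<forall>x y v. r (x + y) v = r x v + r y v) \<and> (\<forall>c x v. r (sc c x) v = scV c (r x v))"

text \<open>R(x1,x2) and S(x1,x2) from the paper, for x1 of degree a and x2 of degree b.\<close>
definition Rop ::
  "('k \<Rightarrow> 'v::ab_group_add \<Rightarrow> 'v) \<Rightarrow> ('g \<Rightarrow> 'g \<Rightarrow> 'k) \<Rightarrow> ('a \<Rightarrow> 'a \<Rightarrow> 'a) \<Rightarrow> ('a \<Rightarrow> 'v \<Rightarrow> 'v)
   \<Rightarrow> ('a \<Rightarrow> 'v \<Rightarrow> 'v) \<Rightarrow> 'g \<Rightarrow> 'g \<Rightarrow> 'a \<Rightarrow> 'a \<Rightarrow> 'v \<Rightarrow> 'v" where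
  "Rop scV eps br rho mu a b x1 x2 v =
     rho x1 (mu x2 v) - scV (eps a b) (mu x2 (rho x1 v)) - mu (br x1 x2) v"

definition Sop ::
  "('k \<Rightarrow> 'v::ab_group_add \<Rightarrow> 'v) \<Rightarrow> ('g \<Rightarrow> 'g \<Rightarrow> 'k) \<Rightarrow> ('a \<Rightarrow> 'a \<Rightarrow> 'a) \<Rightarrow> ('a \<Rightarrow> 'v \<Rightarrow> 'v)
   \<Rightarrow> ('a \<Rightarrow> 'v \<Rightarrow> 'v) \<Rightarrow> 'g \<Rightarrow> 'g \<Rightarrow> 'a \<Rightarrow> 'a \<Rightarrow> 'v \<Rightarrow> 'v" where
  "Sop scV eps m rho mu a b x1 x2 v =
     mu x1 (rho x2 v) + scV (eps a b) (mu x2 (rho x1 v)) - rho (m x1 x2) v"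

definition F_manifold_color_rep ::
  "('k::field \<Rightarrow> 'a::ab_group_add \<Rightarrow> 'a) \<Rightarrow> ('g::ab_group_add \<Rightarrow> 'a set) \<Rightarrow> ('g \<Rightarrow> 'g \<Rightarrow> 'k)
   \<Rightarrow> ('a \<Rightarrow> 'a \<Rightarrow> 'a) \<Rightarrow> ('a \<Rightarrow> 'a \<Rightarrow> 'a)
   \<Rightarrow> ('k \<Rightarrow> 'v::ab_group_add \<Rightarrow> 'v) \<Rightarrow> ('g \<Rightarrow> 'v set) \<Rightarrow> ('a \<Rightarrow> 'v \<Rightarrow> 'v) \<Rightarrow> ('a \<Rightarrow> 'v \<Rightarrow> 'v) \<Rightarrow> bool" where
  "F_manifold_color_rep sc Ag eps m br scV Vg rho mu \<longleftrightarrow>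
     graded_vs scV Vg \<and>
     linear_action sc scV rho \<and> graded_action Ag Vg rho \<and>
     linear_action sc scV mu \<and> graded_action Ag Vg mu \<and>
     (\<forall>a b x y. x \<in> Ag a \<longrightarrow> y \<in> Ag b \<longrightarrow>
        (\<forall>v. rho (br x y) v = rho x (rho y v) - scV (eps a b) (rho y (rho x v)))) \<and>
     (\<forall>x y v. mu (m x y) v = mu x (mu y v)) \<and>
     (\<forall>a b c x1 x2 x3 v. x1 \<in> Ag a \<longrightarrow> x2 \<in> Ag b \<longrightarrow> x3 \<in> Ag c \<longrightarrow>
        Rop scV eps br rho mu (a + b) c (m x1 x2) x3 v =
          mu x1 (Rop scV eps br rho mu b c x2 x3 v) + scV (eps a b) (mu x2 (Rop scV eps br rho mu a c x1 x3 v))) \<and>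
     (\<forall>a b c x1 x2 x3 v. x1 \<in> Ag a \<longrightarrow> x2 \<in> Ag b \<longrightarrow> x3 \<in> Ag c \<longrightarrow>
        mu (Pfun sc eps m br a b x1 x2 x3) v =
          scV (eps a (b + c)) (Sop scV eps m rho mu b c x2 x3 (mu x1 v)) - mu x1 (Sop scV eps m rho mu b c x2 x3 v))"

definition sum_scale :: "('k \<Rightarrow> 'a \<Rightarrow> 'a) \<Rightarrow> ('k \<Rightarrow> 'v \<Rightarrow> 'v) \<Rightarrow> 'k \<Rightarrow> 'a \<times> 'v \<Rightarrow> 'a \<times> 'v" where
  "sum_scale sc scV c p = (sc c (fst p), scV c (snd p))"

definition sum_grading :: "('g \<Rightarrow> 'a set) \<Rightarrow> ('g \<Rightarrow> 'v set) \<Rightarrow> 'g \<Rightarrow> ('a \<times> 'v) set" where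
  "sum_grading Ag Vg g = Ag g \<times> Vg g"

text \<open>Bilinear extension of (x2, v1) |-> eps(v1, x2) op(x2) v1 (degrees of homogeneous components).\<close>
definition twist ::
  "('k \<Rightarrow> 'v::ab_group_add \<Rightarrow> 'v) \<Rightarrow> ('g \<Rightarrow> 'a::ab_group_add set) \<Rightarrow> ('g \<Rightarrow> 'v set) \<Rightarrow> ('g \<Rightarrow> 'g \<Rightarrow> 'k)
   \<Rightarrow> ('a \<Rightarrow> 'v \<Rightarrow> 'v) \<Rightarrow> 'a \<Rightarrow> 'v \<Rightarrow> 'v" where
  "twist scV Ag Vg eps op x2 v1 =
     (\<Sum>a\<in>hsupp Vg v1. \<Sum>b\<in>hsupp Ag x2. scV (eps a b) (op (hcomp Ag x2 b) (hcomp Vg v1 a)))"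

definition semidirect_br ::
  "('k \<Rightarrow> 'v::ab_group_add \<Rightarrow> 'v) \<Rightarrow> ('g \<Rightarrow> 'a::ab_group_add set) \<Rightarrow> ('g \<Rightarrow> 'v set) \<Rightarrow> ('g \<Rightarrow> 'g \<Rightarrow> 'k)
   \<Rightarrow> ('a \<Rightarrow> 'a \<Rightarrow> 'a) \<Rightarrow> ('a \<Rightarrow> 'v \<Rightarrow> 'v) \<Rightarrow> 'a \<times> 'v \<Rightarrow> 'a \<times> 'v \<Rightarrow> 'a \<times> 'v" where
  "semidirect_br scV Ag Vg eps br rho p q =
     (br (fst p) (fst q), rho (fst p) (snd q) - twist scV Ag Vg eps rho (fst q) (snd p))"

definition semidirect_mul ::
  "('k \<Rightarrow> 'v::ab_group_add \<Rightarrow> 'v) \<Rightarrow> ('g \<Rightarrow> 'a::ab_group_add set) \<Rightarrow> ('g \<Rightarrow> 'v set) \<Rightarrow> ('g \<Rightarrow> 'g \<Rightarrow> 'k)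
   \<Rightarrow> ('a \<Rightarrow> 'a \<Rightarrow> 'a) \<Rightarrow> ('a \<Rightarrow> 'v \<Rightarrow> 'v) \<Rightarrow> 'a \<times> 'v \<Rightarrow> 'a \<times> 'v \<Rightarrow> 'a \<times> 'v" where
  "semidirect_mul scV Ag Vg eps m mu p q =
     (m (fst p) (fst q), mu (fst p) (snd q) + twist scV Ag Vg eps mu (fst q) (snd p))"

end

theory Submission
  imports Defs
begin

(* Every operation on A \<oplus> V is additive in each argument, and every element of A \<oplus> V is a
   finite sum of pure elements: homogeneous elements lying in A or in V. So each axiom only has to
   be checked on pure arguments, where the operations are those of A, the actions \<rho> and \<mu>,
   and their \<epsilon>-twisted mirror images; the twist is what makes \<epsilon>-commutativity and
   skew-symmetry hold. Products and brackets of two elements of V vanish, so only arguments with at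
   most one entry in V contribute. With no entry in V the axioms are those of A; with exactly one
   they become, after collecting \<epsilon>-factors by the bicharacter laws, the axioms of the
   representation: the module conditions on \<rho> and \<mu> for the Jacobi identity and
   associativity, and the conditions on R and on \<mu>(P_x) for the Hertling-Manin relation. *)

lemma bilinear_op_distrib:
  assumes "bilinear_op sc f"
  shows "f x (y + z) = f x y + f x z" "f (x + y) z = f x z + f y z"
    "f x (sc c y) = sc c (f x y)" "f (sc c x) y = sc c (f x y)"
    "f x 0 = 0" "f 0 y = 0" "f x (- y) = - f x y" "f (- x) y = - f x y"
    "f x (y - z) = f x y - f x z" "f (x - y) z = f x z - f y z"
proof -
  have right: "module_hom sc sc (f x)" for x
    using assms by (simp add: bilinear_op_def module_hom_iff_linear)
  have left: "module_hom sc sc (\<lambda>x. f x y)" for y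
    using assms by (simp add: bilinear_op_def module_hom_iff_linear)
  show "f x (y + z) = f x y + f x z" "f x (sc c y) = sc c (f x y)" "f x 0 = 0"
    "f x (- y) = - f x y" "f x (y - z) = f x y - f x z"
    by (simp_all add: module_hom.add[OF right] module_hom.scale[OF right] module_hom.zero[OF right]
        module_hom.neg[OF right] module_hom.diff[OF right])
  show "f (x + y) z = f x z + f y z" "f (sc c x) y = sc c (f x y)" "f 0 y = 0"
    "f (- x) y = - f x y" "f (x - y) z = f x z - f y z"
    using module_hom.add[OF left] module_hom.scale[OF left] module_hom.zero[OF left]
      module_hom.neg[OF left] module_hom.diff[OF left] by simp_all
qed

lemma linear_action_distrib:
  assumes "linear_action sc scV r"
  shows "r x (v + w) = r x v + r x w" "r x (scV c v) = scV c (r x v)" "r x 0 = 0"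
    "r x (- v) = - r x v" "r x (v - w) = r x v - r x w"
    "r (x + y) v = r x v + r y v" "r (sc c x) v = scV c (r x v)" "r 0 v = 0"
    "r (- x) v = - r x v" "r (x - y) v = r x v - r y v"
proof -
  have right: "module_hom scV scV (r x)" for x
    using assms by (simp add: linear_action_def module_hom_iff_linear)
  have add: "r (x + y) v = r x v + r y v" for x y v
    using assms by (simp add: linear_action_def)
  then have zero: "r 0 v = 0" for v
    by (metis add_cancel_right_right add_0)
  then have neg: "r (- x) v = - r x v" for x v
    using add[of x "- x" v] by (simp add: eq_neg_iff_add_eq_0 add.commute)
  show "r x (v + w) = r x v + r x w" "r x (scV c v) = scV c (r x v)" "r x 0 = 0"
    "r x (- v) = - r x v" "r x (v - w) = r x v - r x w"
    by (simp_all add: module_hom.add[OF right] module_hom.scale[OF right] module_hom.zero[OF right]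
        module_hom.neg[OF right] module_hom.diff[OF right])
  show "r (x + y) v = r x v + r y v" "r 0 v = 0" "r (- x) v = - r x v"
    "r (x - y) v = r x v - r y v"
    using add zero neg add[of x "- y" v] neg[of y v] by simp_all
  show "r (sc c x) v = scV c (r x v)"
    using assms by (simp add: linear_action_def)
qed

lemma is_decomp_sum_superset:
  assumes "is_decomp G x f" "finite S" "{g. f g \<noteq> 0} \<subseteq> S"
  shows "x = sum f S"
proof -
  have "x = sum f {g. f g \<noteq> 0}"
    using assms(1) by (simp add: is_decomp_def)
  also have "\<dots> = sum f S"
    using assms(2,3) by (intro sum.mono_neutral_left) auto
  finally show ?thesis .
qed

lemma is_decompI:
  assumes "finite S" "{g. f g \<noteq> 0} \<subseteq> S" "\<And>g. f g \<in> G g" "x = sum f S"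
  shows "is_decomp G x f"
proof -
  have "sum f S = sum f {g. f g \<noteq> 0}"
    using assms(1,2) by (intro sum.mono_neutral_right) auto
  then show ?thesis
    using assms finite_subset unfolding is_decomp_def by auto
qed

definition hertling_manin ::
  "('k::field \<Rightarrow> 'a::ab_group_add \<Rightarrow> 'a) \<Rightarrow> ('g::ab_group_add \<Rightarrow> 'g \<Rightarrow> 'k)
   \<Rightarrow> ('a \<Rightarrow> 'a \<Rightarrow> 'a) \<Rightarrow> ('a \<Rightarrow> 'a \<Rightarrow> 'a)
   \<Rightarrow> 'g \<Rightarrow> 'g \<Rightarrow> 'g \<Rightarrow> 'a \<Rightarrow> 'a \<Rightarrow> 'a \<Rightarrow> 'a \<Rightarrow> bool" where
  "hertling_manin sc eps m br a b c x y z w \<longleftrightarrow>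
     Pfun sc eps m br (a + b) c (m x y) z w =
       m x (Pfun sc eps m br b c y z w) + sc (eps a b) (m y (Pfun sc eps m br a c x z w))"

definition jacobiator ::
  "('k::field \<Rightarrow> 'a::ab_group_add \<Rightarrow> 'a) \<Rightarrow> ('g \<Rightarrow> 'g \<Rightarrow> 'k) \<Rightarrow> ('a \<Rightarrow> 'a \<Rightarrow> 'a)
   \<Rightarrow> 'g \<Rightarrow> 'g \<Rightarrow> 'g \<Rightarrow> 'a \<Rightarrow> 'a \<Rightarrow> 'a \<Rightarrow> 'a" where
  "jacobiator sc eps br a b c x y z =
     sc (eps c a) (br x (br y z)) + sc (eps b c) (br z (br x y)) + sc (eps a b) (br y (br z x))"

lemma F_manifold_colorI:
  assumes "graded_vs sc Ag" "bilinear_op sc m" "bilinear_op sc br" "graded_op Ag m" "graded_op Ag br"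
    and "\<And>x y z. m (m x y) z = m x (m y z)"
    and "\<And>a b x y. x \<in> Ag a \<Longrightarrow> y \<in> Ag b \<Longrightarrow> m x y = sc (eps a b) (m y x)"
    and "\<And>a b x y. x \<in> Ag a \<Longrightarrow> y \<in> Ag b \<Longrightarrow> br x y = - sc (eps a b) (br y x)"
    and "\<And>a b c x y z. x \<in> Ag a \<Longrightarrow> y \<in> Ag b \<Longrightarrow> z \<in> Ag c \<Longrightarrow> jacobiator sc eps br a b c x y z = 0"
    and "\<And>a b c x y z w. x \<in> Ag a \<Longrightarrow> y \<in> Ag b \<Longrightarrow> z \<in> Ag c \<Longrightarrow>
           hertling_manin sc eps m br a b c x y z w"
  shows "F_manifold_color sc Ag eps m br"
  unfolding F_manifold_color_def eps_comm_assoc_def lie_color_def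
  by (intro conjI allI impI assms[unfolded jacobiator_def hertling_manin_def])

context vector_space
begin

lemma jacobiator_add:
  assumes br: "bilinear_op scale br"
  shows "jacobiator scale eps br a b c (x + x') y z =
      jacobiator scale eps br a b c x y z + jacobiator scale eps br a b c x' y z"
    "jacobiator scale eps br a b c x (y + y') z =
      jacobiator scale eps br a b c x y z + jacobiator scale eps br a b c x y' z"
    "jacobiator scale eps br a b c x y (z + z') =
      jacobiator scale eps br a b c x y z + jacobiator scale eps br a b c x y z'"
  by (simp_all add: jacobiator_def bilinear_op_distrib[OF br] scale_right_distrib algebra_simps)

context
  fixes m br :: "'b \<Rightarrow> 'b \<Rightarrow> 'b"
  assumes m: "bilinear_op scale m" and br: "bilinear_op scale br"
begin

lemma Pfun_add:
  "Pfun scale eps m br a b (x + x') y z =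
     Pfun scale eps m br a b x y z + Pfun scale eps m br a b x' y z"
  "Pfun scale eps m br a b x (y + y') z =
     Pfun scale eps m br a b x y z + Pfun scale eps m br a b x y' z"
  "Pfun scale eps m br a b x y (z + z') =
     Pfun scale eps m br a b x y z + Pfun scale eps m br a b x y z'"
  by (simp_all add: Pfun_def bilinear_op_distrib[OF m] bilinear_op_distrib[OF br]
      scale_right_distrib algebra_simps)

lemma hertling_manin_add:
  "hertling_manin scale eps m br a b c x y z w \<Longrightarrow> hertling_manin scale eps m br a b c x' y z w \<Longrightarrow>
     hertling_manin scale eps m br a b c (x + x') y z w"
  "hertling_manin scale eps m br a b c x y z w \<Longrightarrow> hertling_manin scale eps m br a b c x y' z w \<Longrightarrow>
     hertling_manin scale eps m br a b c x (y + y') z w"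
  "hertling_manin scale eps m br a b c x y z w \<Longrightarrow> hertling_manin scale eps m br a b c x y z' w \<Longrightarrow>
     hertling_manin scale eps m br a b c x y (z + z') w"
  "hertling_manin scale eps m br a b c x y z w \<Longrightarrow> hertling_manin scale eps m br a b c x y z w' \<Longrightarrow>
     hertling_manin scale eps m br a b c x y z (w + w')"
  unfolding hertling_manin_def
  by (simp_all add: Pfun_add bilinear_op_distrib[OF m] scale_right_distrib algebra_simps)

lemma hertling_manin_zero: "hertling_manin scale eps m br a b c x y z 0"
  by (simp add: hertling_manin_def Pfun_def bilinear_op_distrib[OF m] bilinear_op_distrib[OF br]
      scale_zero_right)

end

end

section \<open>Graded vector spaces and the twisted action\<close>

locale graded_vector_space =
  fixes scale :: "'k::field \<Rightarrow> 'v::ab_group_add \<Rightarrow> 'v" and grade :: "'g \<Rightarrow> 'v set"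
  assumes graded_vs: "graded_vs scale grade"
begin

sublocale vector_space scale
  using graded_vs by (simp add: graded_vs_def)

lemma subspace_grade: "subspace (grade g)"
  using graded_vs by (simp add: graded_vs_def)

lemma grade_zero [simp]: "0 \<in> grade g"
  and grade_add: "x \<in> grade g \<Longrightarrow> y \<in> grade g \<Longrightarrow> x + y \<in> grade g"
  and grade_diff: "x \<in> grade g \<Longrightarrow> y \<in> grade g \<Longrightarrow> x - y \<in> grade g"
  and grade_scale: "x \<in> grade g \<Longrightarrow> scale c x \<in> grade g"
  using subspace_grade by (auto intro: subspace_0 subspace_add subspace_diff subspace_scale)

lemma is_decomp_hcomp: "is_decomp grade x (hcomp grade x)"
  unfolding hcomp_def using graded_vs by (simp add: graded_vs_def theI')

lemma hcomp_eqI: "is_decomp grade x f \<Longrightarrow> hcomp grade x = f"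
  using graded_vs is_decomp_hcomp unfolding graded_vs_def by blast

lemma finite_hsupp: "finite (hsupp grade x)"
  using is_decomp_hcomp by (simp add: is_decomp_def hsupp_def)

lemma hcomp_in_grade: "hcomp grade x g \<in> grade g"
  using is_decomp_hcomp by (simp add: is_decomp_def)

lemma sum_hcomp: "finite S \<Longrightarrow> hsupp grade x \<subseteq> S \<Longrightarrow> x = sum (hcomp grade x) S"
  using is_decomp_hcomp by (rule is_decomp_sum_superset) (simp_all add: hsupp_def)

lemma hcomp_add: "hcomp grade (x + y) = (\<lambda>g. hcomp grade x g + hcomp grade y g)"
proof (rule hcomp_eqI, rule is_decompI)
  let ?S = "hsupp grade x \<union> hsupp grade y"
  show "finite ?S"
    using finite_hsupp by simp
  show "{g. hcomp grade x g + hcomp grade y g \<noteq> 0} \<subseteq> ?S"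
    by (auto simp: hsupp_def)
  show "hcomp grade x g + hcomp grade y g \<in> grade g" for g
    by (simp add: hcomp_in_grade grade_add)
  show "x + y = (\<Sum>g\<in>?S. hcomp grade x g + hcomp grade y g)"
    using sum_hcomp[of ?S x] sum_hcomp[of ?S y] finite_hsupp by (simp add: sum.distrib)
qed

lemma hcomp_scale: "hcomp grade (scale c x) = (\<lambda>g. scale c (hcomp grade x g))"
proof (rule hcomp_eqI, rule is_decompI)
  show "finite (hsupp grade x)"
    by (rule finite_hsupp)
  show "{g. scale c (hcomp grade x g) \<noteq> 0} \<subseteq> hsupp grade x"
    by (auto simp: hsupp_def)
  show "scale c (hcomp grade x g) \<in> grade g" for g
    by (simp add: hcomp_in_grade grade_scale)
  show "scale c x = (\<Sum>g\<in>hsupp grade x. scale c (hcomp grade x g))"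
    using sum_hcomp[OF finite_hsupp order_refl, of x] by (metis scale_sum_right)
qed

lemma hcomp_homogeneous: "x \<in> grade a \<Longrightarrow> hcomp grade x = (\<lambda>g. if g = a then x else 0)"
  by (rule hcomp_eqI, rule is_decompI[where S = "{a}"]) auto

lemma hsupp_homogeneous: "x \<in> grade a \<Longrightarrow> hsupp grade x \<subseteq> {a}"
  by (auto simp: hsupp_def hcomp_homogeneous)

lemma hsupp_zero [simp]: "hsupp grade 0 = {}"
  using hcomp_homogeneous[OF grade_zero] by (simp add: hsupp_def)

lemma homogeneous_induct:
  assumes "P 0" and "\<And>x y. P x \<Longrightarrow> P y \<Longrightarrow> P (x + y)" and "\<And>g x. x \<in> grade g \<Longrightarrow> P x"
  shows "P x"
proof -
  have "P (sum (hcomp grade x) S)" if "finite S" for S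
    using that by (induction rule: finite_induct) (auto intro: assms hcomp_in_grade)
  then show ?thesis
    using sum_hcomp[OF finite_hsupp order_refl, of x] finite_hsupp by metis
qed

end

lemma is_decomp_sum_grading:
  "is_decomp (sum_grading Ag Vg) p f \<longleftrightarrow>
     is_decomp Ag (fst p) (\<lambda>g. fst (f g)) \<and> is_decomp Vg (snd p) (\<lambda>g. snd (f g))"
proof
  assume f: "is_decomp (sum_grading Ag Vg) p f"
  let ?S = "{g. f g \<noteq> 0}"
  have S: "finite ?S" "\<And>g. f g \<in> Ag g \<times> Vg g" "p = sum f ?S"
    using f by (simp_all add: is_decomp_def sum_grading_def)
  show "is_decomp Ag (fst p) (\<lambda>g. fst (f g)) \<and> is_decomp Vg (snd p) (\<lambda>g. snd (f g))"
    using S by (intro conjI is_decompI[OF S(1)]) (auto simp: fst_sum snd_sum mem_Times_iff)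
next
  assume "is_decomp Ag (fst p) (\<lambda>g. fst (f g)) \<and> is_decomp Vg (snd p) (\<lambda>g. snd (f g))"
  then have fst: "is_decomp Ag (fst p) (\<lambda>g. fst (f g))"
    and snd: "is_decomp Vg (snd p) (\<lambda>g. snd (f g))"
    by simp_all
  let ?S = "{g. fst (f g) \<noteq> 0} \<union> {g. snd (f g) \<noteq> 0}"
  have "finite ?S"
    using fst snd by (simp add: is_decomp_def)
  moreover have "{g. f g \<noteq> 0} \<subseteq> ?S"
    by (auto simp: prod_eq_iff)
  moreover have "fst p = fst (sum f ?S)" "snd p = snd (sum f ?S)"
    using is_decomp_sum_superset[OF fst \<open>finite ?S\<close>] is_decomp_sum_superset[OF snd \<open>finite ?S\<close>]
    by (auto simp: fst_sum snd_sum)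
  ultimately show "is_decomp (sum_grading Ag Vg) p f"
    using fst snd
    by (intro is_decompI) (auto simp: is_decomp_def sum_grading_def prod_eq_iff mem_Times_iff)
qed

locale graded_pair = A: graded_vector_space sc Ag + V: graded_vector_space scV Vg
  for sc :: "'k::field \<Rightarrow> 'a::ab_group_add \<Rightarrow> 'a" and Ag :: "'g::ab_group_add \<Rightarrow> 'a set"
    and scV :: "'k \<Rightarrow> 'v::ab_group_add \<Rightarrow> 'v" and Vg :: "'g \<Rightarrow> 'v set"
begin

lemma vector_space_sum_scale: "vector_space (sum_scale sc scV)"
  unfolding vector_space_def sum_scale_def
  by (simp add: A.scale_right_distrib V.scale_right_distrib A.scale_left_distrib V.scale_left_distrib)

lemma graded_vs_sum_grading: "graded_vs (sum_scale sc scV) (sum_grading Ag Vg)"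
proof -
  interpret S: vector_space "sum_scale sc scV"
    by (rule vector_space_sum_scale)
  have "S.subspace (sum_grading Ag Vg g)" for g
    unfolding S.subspace_def sum_grading_def sum_scale_def
    by (auto simp: zero_prod_def A.grade_add V.grade_add A.grade_scale V.grade_scale)
  moreover have "\<exists>!f. is_decomp (sum_grading Ag Vg) p f" for p :: "'a \<times> 'v"
  proof
    show "is_decomp (sum_grading Ag Vg) p (\<lambda>g. (hcomp Ag (fst p) g, hcomp Vg (snd p) g))"
      by (simp add: is_decomp_sum_grading A.is_decomp_hcomp V.is_decomp_hcomp)
    show "f = (\<lambda>g. (hcomp Ag (fst p) g, hcomp Vg (snd p) g))"
      if "is_decomp (sum_grading Ag Vg) p f" for f
      using that A.hcomp_eqI V.hcomp_eqI by (auto simp: is_decomp_sum_grading)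
  qed
  ultimately show ?thesis
    by (simp add: graded_vs_def S.vector_space_axioms)
qed

sublocale AV: graded_vector_space "sum_scale sc scV" "sum_grading Ag Vg"
  by (rule graded_vector_space.intro, rule graded_vs_sum_grading)

definition pure :: "'g \<Rightarrow> 'a \<times> 'v \<Rightarrow> bool" where
  "pure a p \<longleftrightarrow> (\<exists>x\<in>Ag a. p = (x, 0)) \<or> (\<exists>v\<in>Vg a. p = (0, v))"

lemma sum_grading_induct [consumes 1, case_names add pure]:
  assumes "p \<in> sum_grading Ag Vg a" and "\<And>p q. P p \<Longrightarrow> P q \<Longrightarrow> P (p + q)"
    and "\<And>p. pure a p \<Longrightarrow> P p"
  shows "P p"
proof -
  have "P ((fst p, 0) + (0, snd p))"
    using assms by (intro assms(2) assms(3)) (auto simp: pure_def sum_grading_def mem_Times_iff)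
  then show ?thesis
    by simp
qed

lemma pure_induct [case_names zero add pure]:
  assumes "P 0" and "\<And>p q. P p \<Longrightarrow> P q \<Longrightarrow> P (p + q)" and "\<And>a p. pure a p \<Longrightarrow> P p"
  shows "P p"
proof (rule AV.homogeneous_induct)
  show "P p" if "p \<in> sum_grading Ag Vg a" for a p
    using that by (rule sum_grading_induct[where P = P]) (fact assms)+
qed (fact assms)+

lemma twist_eq_sum:
  assumes r: "linear_action sc scV r" and fin: "finite S" "finite T"
    and sub: "hsupp Vg v \<subseteq> S" "hsupp Ag x \<subseteq> T"
  shows "twist scV Ag Vg eps r x v = (\<Sum>a\<in>S. \<Sum>b\<in>T. scV (eps a b) (r (hcomp Ag x b) (hcomp Vg v a)))"
  unfolding twist_def using fin sub
  by (intro sum.mono_neutral_cong_left)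
    (auto intro!: sum.mono_neutral_left simp: hsupp_def linear_action_distrib[OF r])

lemma twist_zero_left [simp]: "twist scV Ag Vg eps r 0 v = 0"
  and twist_zero_right [simp]: "twist scV Ag Vg eps r x 0 = 0"
  by (simp_all add: twist_def)

context
  fixes r :: "'a \<Rightarrow> 'v \<Rightarrow> 'v"
  assumes r: "linear_action sc scV r"
begin

lemma twist_add_left:
  "twist scV Ag Vg eps r (x + y) v = twist scV Ag Vg eps r x v + twist scV Ag Vg eps r y v"
proof -
  let ?T = "hsupp Ag x \<union> hsupp Ag y \<union> hsupp Ag (x + y)"
  have "finite ?T"
    using A.finite_hsupp by simp
  then show ?thesis
    using V.finite_hsupp
    by (subst (1 2 3) twist_eq_sum[OF r _ _ order_refl, of _ ?T])
      (auto simp: A.hcomp_add linear_action_distrib[OF r] V.scale_right_distrib sum.distrib)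
qed

lemma twist_add_right:
  "twist scV Ag Vg eps r x (u + v) = twist scV Ag Vg eps r x u + twist scV Ag Vg eps r x v"
proof -
  let ?S = "hsupp Vg u \<union> hsupp Vg v \<union> hsupp Vg (u + v)"
  have "finite ?S"
    using V.finite_hsupp by simp
  then show ?thesis
    using A.finite_hsupp
    by (subst (1 2 3) twist_eq_sum[OF r _ _ _ order_refl, of ?S])
      (auto simp: V.hcomp_add linear_action_distrib[OF r] V.scale_right_distrib sum.distrib)
qed

lemma twist_scale_left: "twist scV Ag Vg eps r (sc c x) v = scV c (twist scV Ag Vg eps r x v)"
proof -
  let ?T = "hsupp Ag x \<union> hsupp Ag (sc c x)"
  have "finite ?T"
    using A.finite_hsupp by simp
  then show ?thesis
    using V.finite_hsupp
    by (subst (1 2) twist_eq_sum[OF r _ _ order_refl, of _ ?T])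
      (auto simp: A.hcomp_scale linear_action_distrib[OF r] V.scale_sum_right mult.commute)
qed

lemma twist_scale_right: "twist scV Ag Vg eps r x (scV c v) = scV c (twist scV Ag Vg eps r x v)"
proof -
  let ?S = "hsupp Vg v \<union> hsupp Vg (scV c v)"
  have "finite ?S"
    using V.finite_hsupp by simp
  then show ?thesis
    using A.finite_hsupp
    by (subst (1 2) twist_eq_sum[OF r _ _ _ order_refl, of ?S])
      (auto simp: V.hcomp_scale linear_action_distrib[OF r] V.scale_sum_right mult.commute)
qed

lemma twist_neg_right: "twist scV Ag Vg eps r x (- v) = - twist scV Ag Vg eps r x v"
  using twist_add_right[of eps x v "- v"] by (simp add: eq_neg_iff_add_eq_0 add.commute)

lemma twist_homogeneous:
  assumes "x \<in> Ag b" and "v \<in> Vg a"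
  shows "twist scV Ag Vg eps r x v = scV (eps a b) (r x v)"
  using assms
  by (subst twist_eq_sum[OF r _ _ V.hsupp_homogeneous A.hsupp_homogeneous])
    (auto simp: A.hcomp_homogeneous V.hcomp_homogeneous)

end

end

section \<open>The semidirect product A \<oplus> V\<close>

locale semidirect_product = graded_pair sc Ag scV Vg
  for sc :: "'k::field \<Rightarrow> 'a::ab_group_add \<Rightarrow> 'a" and Ag :: "'g::ab_group_add \<Rightarrow> 'a set"
    and scV :: "'k \<Rightarrow> 'v::ab_group_add \<Rightarrow> 'v" and Vg :: "'g \<Rightarrow> 'v set" +
  fixes eps :: "'g \<Rightarrow> 'g \<Rightarrow> 'k" and m br :: "'a \<Rightarrow> 'a \<Rightarrow> 'a" and rho mu :: "'a \<Rightarrow> 'v \<Rightarrow> 'v"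
  assumes skew: "skew_bichar eps"
    and algebra: "F_manifold_color sc Ag eps m br"
    and rep: "F_manifold_color_rep sc Ag eps m br scV Vg rho mu"
begin

lemma eps_swap: "eps a b * eps b a = 1"
  and eps_add_left: "eps (a + b) c = eps a c * eps b c"
  and eps_add_right: "eps a (b + c) = eps a b * eps a c"
  using skew by (simp_all add: skew_bichar_def)

lemma m_bilinear: "bilinear_op sc m"
  and m_grade: "x \<in> Ag a \<Longrightarrow> y \<in> Ag b \<Longrightarrow> m x y \<in> Ag (a + b)"
  and m_assoc: "m (m x y) z = m x (m y z)"
  and m_comm: "x \<in> Ag a \<Longrightarrow> y \<in> Ag b \<Longrightarrow> m x y = sc (eps a b) (m y x)"
  using algebra unfolding F_manifold_color_def eps_comm_assoc_def graded_op_def by blast+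

lemma br_bilinear: "bilinear_op sc br"
  and br_grade: "x \<in> Ag a \<Longrightarrow> y \<in> Ag b \<Longrightarrow> br x y \<in> Ag (a + b)"
  and br_skew: "x \<in> Ag a \<Longrightarrow> y \<in> Ag b \<Longrightarrow> br x y = - sc (eps a b) (br y x)"
  and br_jacobi: "x \<in> Ag a \<Longrightarrow> y \<in> Ag b \<Longrightarrow> z \<in> Ag c \<Longrightarrow> jacobiator sc eps br a b c x y z = 0"
  using algebra unfolding F_manifold_color_def lie_color_def graded_op_def jacobiator_def by blast+

lemma hertling_manin_algebra:
  "x \<in> Ag a \<Longrightarrow> y \<in> Ag b \<Longrightarrow> z \<in> Ag c \<Longrightarrow> hertling_manin sc eps m br a b c x y z w"
  using algebra unfolding F_manifold_color_def hertling_manin_def by blast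

lemma rho_linear: "linear_action sc scV rho"
  and rho_grade: "x \<in> Ag b \<Longrightarrow> v \<in> Vg a \<Longrightarrow> rho x v \<in> Vg (a + b)"
  and rho_br: "x \<in> Ag a \<Longrightarrow> y \<in> Ag b \<Longrightarrow>
    rho (br x y) v = rho x (rho y v) - scV (eps a b) (rho y (rho x v))"
  and mu_linear: "linear_action sc scV mu"
  and mu_grade: "x \<in> Ag b \<Longrightarrow> v \<in> Vg a \<Longrightarrow> mu x v \<in> Vg (a + b)"
  and mu_m: "mu (m x y) v = mu x (mu y v)"
  and rep_R: "x1 \<in> Ag a \<Longrightarrow> x2 \<in> Ag b \<Longrightarrow> x3 \<in> Ag c \<Longrightarrow>
    Rop scV eps br rho mu (a + b) c (m x1 x2) x3 v =
      mu x1 (Rop scV eps br rho mu b c x2 x3 v) +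
      scV (eps a b) (mu x2 (Rop scV eps br rho mu a c x1 x3 v))"
  and rep_P: "x1 \<in> Ag a \<Longrightarrow> x2 \<in> Ag b \<Longrightarrow> x3 \<in> Ag c \<Longrightarrow>
    mu (Pfun sc eps m br a b x1 x2 x3) v =
      scV (eps a (b + c)) (Sop scV eps m rho mu b c x2 x3 (mu x1 v)) -
      mu x1 (Sop scV eps m rho mu b c x2 x3 v)"
  using rep by (simp_all add: F_manifold_color_rep_def graded_action_def)

lemmas m_distrib = bilinear_op_distrib[OF m_bilinear]
  and br_distrib = bilinear_op_distrib[OF br_bilinear]
  and rho_distrib = linear_action_distrib[OF rho_linear]
  and mu_distrib = linear_action_distrib[OF mu_linear]

abbreviation "sc' \<equiv> sum_scale sc scV"
abbreviation "Ag' \<equiv> sum_grading Ag Vg"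
abbreviation "m' \<equiv> semidirect_mul scV Ag Vg eps m mu"
abbreviation "br' \<equiv> semidirect_br scV Ag Vg eps br rho"

lemmas twist_linear =
  twist_add_left twist_add_right twist_scale_left twist_scale_right twist_neg_right

lemma bilinear_op_semidirect_mul: "bilinear_op sc' m'"
  unfolding bilinear_op_def Vector_Spaces.linear_iff
  by (simp add: vector_space_sum_scale semidirect_mul_def sum_scale_def m_distrib mu_distrib
      twist_linear[OF mu_linear] V.scale_right_distrib algebra_simps)

lemma bilinear_op_semidirect_br: "bilinear_op sc' br'"
  unfolding bilinear_op_def Vector_Spaces.linear_iff
  by (simp add: vector_space_sum_scale semidirect_br_def sum_scale_def br_distrib rho_distrib
      twist_linear[OF rho_linear] V.scale_right_diff_distrib algebra_simps)

lemmas m'_distrib = bilinear_op_distrib[OF bilinear_op_semidirect_mul]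
  and br'_distrib = bilinear_op_distrib[OF bilinear_op_semidirect_br]

(* In lemma names, a suffix such as AVA records which summand, A or V, each argument lies in. *)
lemma semidirect_mul_AA [simp]: "m' (x, 0) (y, 0) = (m x y, 0)"
  and semidirect_mul_AV [simp]: "m' (x, 0) (0, v) = (0, mu x v)"
  and semidirect_mul_VV [simp]: "m' (0, u) (0, v) = (0, 0)"
  and semidirect_br_AA [simp]: "br' (x, 0) (y, 0) = (br x y, 0)"
  and semidirect_br_AV [simp]: "br' (x, 0) (0, v) = (0, rho x v)"
  and semidirect_br_VV [simp]: "br' (0, u) (0, v) = (0, 0)"
  by (simp_all add: semidirect_mul_def semidirect_br_def m_distrib mu_distrib br_distrib rho_distrib)

lemma semidirect_mul_VA_twist [simp]: "m' (0, u) (y, 0) = (0, twist scV Ag Vg eps mu y u)"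
  and semidirect_br_VA_twist [simp]: "br' (0, u) (y, 0) = (0, - twist scV Ag Vg eps rho y u)"
  by (simp_all add: semidirect_mul_def semidirect_br_def m_distrib mu_distrib br_distrib rho_distrib)

lemma semidirect_mul_VA:
  "u \<in> Vg a \<Longrightarrow> y \<in> Ag b \<Longrightarrow> m' (0, u) (y, 0) = (0, scV (eps a b) (mu y u))"
  and semidirect_br_VA:
  "u \<in> Vg a \<Longrightarrow> y \<in> Ag b \<Longrightarrow> br' (0, u) (y, 0) = (0, - scV (eps a b) (rho y u))"
  by (simp_all add: semidirect_mul_def semidirect_br_def m_distrib mu_distrib br_distrib rho_distrib
      twist_homogeneous[OF mu_linear] twist_homogeneous[OF rho_linear])

lemma graded_op_semidirect_mul: "graded_op Ag' m'"
  unfolding graded_op_def sum_grading_def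
proof (intro allI impI)
  fix a b p q assume p: "p \<in> Ag a \<times> Vg a" and q: "q \<in> Ag b \<times> Vg b"
  then have "mu (fst p) (snd q) \<in> Vg (a + b)" "twist scV Ag Vg eps mu (fst q) (snd p) \<in> Vg (a + b)"
    using mu_grade[of "fst p" a "snd q" b] mu_grade[of "fst q" b "snd p" a]
    by (auto simp: twist_homogeneous[OF mu_linear] V.grade_scale add.commute)
  then show "m' p q \<in> Ag (a + b) \<times> Vg (a + b)"
    using p q by (auto simp: semidirect_mul_def m_grade V.grade_add)
qed

lemma graded_op_semidirect_br: "graded_op Ag' br'"
  unfolding graded_op_def sum_grading_def
proof (intro allI impI)
  fix a b p q assume p: "p \<in> Ag a \<times> Vg a" and q: "q \<in> Ag b \<times> Vg b"
  then have "rho (fst p) (snd q) \<in> Vg (a + b)" "twist scV Ag Vg eps rho (fst q) (snd p) \<in> Vg (a + b)"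
    using rho_grade[of "fst p" a "snd q" b] rho_grade[of "fst q" b "snd p" a]
    by (auto simp: twist_homogeneous[OF rho_linear] V.grade_scale add.commute)
  then show "br' p q \<in> Ag (a + b) \<times> Vg (a + b)"
    using p q by (auto simp: semidirect_br_def br_grade V.grade_diff)
qed

lemma mu_comm: "x \<in> Ag a \<Longrightarrow> y \<in> Ag b \<Longrightarrow> mu x (mu y v) = scV (eps a b) (mu y (mu x v))"
  by (metis m_comm mu_m mu_distrib(7))

lemma semidirect_mul_assoc_VAA:
  assumes u: "u \<in> Vg a" and y: "y \<in> Ag b" and z: "z \<in> Ag c"
  shows "m' (m' (0, u) (y, 0)) (z, 0) = m' (0, u) (m' (y, 0) (z, 0))"
  using semidirect_mul_VA[OF u y] semidirect_mul_VA[OF V.grade_scale[OF mu_grade[OF y u]] z]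
    semidirect_mul_VA[OF u m_grade[OF y z]]
  by (simp add: mu_distrib mu_m mu_comm[OF y z] eps_add_left eps_add_right mult_ac)

lemma semidirect_mul_assoc_AVA:
  assumes x: "x \<in> Ag a" and v: "v \<in> Vg b" and z: "z \<in> Ag c"
  shows "m' (m' (x, 0) (0, v)) (z, 0) = m' (x, 0) (m' (0, v) (z, 0))"
  using semidirect_mul_VA[OF v z] semidirect_mul_VA[OF mu_grade[OF x v] z]
  by (simp add: mu_distrib mu_comm[OF x z] eps_add_left mult_ac)

lemma semidirect_mul_assoc_pure:
  "pure a p \<Longrightarrow> pure b q \<Longrightarrow> pure c r \<Longrightarrow> m' (m' p q) r = m' p (m' q r)"
  unfolding pure_def
  by (elim disjE bexE; simp only:;
      ((rule semidirect_mul_assoc_VAA semidirect_mul_assoc_AVA; assumption) |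
       simp add: m_assoc mu_m mu_distrib m_distrib))

lemma semidirect_mul_assoc: "m' (m' p q) r = m' p (m' q r)"
proof (induction p rule: pure_induct)
  case (pure a p)
  then show ?case
  proof (induction q rule: pure_induct)
    case (pure b q)
    then show ?case
      by (induction r rule: pure_induct) (simp_all add: m'_distrib semidirect_mul_assoc_pure)
  qed (simp_all add: m'_distrib)
qed (simp_all add: m'_distrib)

lemma semidirect_mul_comm_pure:
  "pure a p \<Longrightarrow> pure b q \<Longrightarrow> m' p q = sc' (eps a b) (m' q p)"
proof -
  have AA: "m' (x, 0) (y, 0) = sc' (eps a b) (m' (y, 0) (x, 0))" if "x \<in> Ag a" "y \<in> Ag b" for x y
    using m_comm[OF that] by (simp add: sum_scale_def)
  have AV: "m' (x, 0) (0, v) = sc' (eps a b) (m' (0, v) (x, 0))" if "x \<in> Ag a" "v \<in> Vg b" for x v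
    using semidirect_mul_VA[OF that(2,1)] by (simp add: sum_scale_def eps_swap)
  have VA: "m' (0, u) (y, 0) = sc' (eps a b) (m' (y, 0) (0, u))" if "u \<in> Vg a" "y \<in> Ag b" for u y
    using semidirect_mul_VA[OF that] by (simp add: sum_scale_def)
  show "pure a p \<Longrightarrow> pure b q \<Longrightarrow> m' p q = sc' (eps a b) (m' q p)"
    unfolding pure_def
    by (elim disjE bexE; simp only:; ((rule AA AV VA; assumption) | simp add: sum_scale_def))
qed

lemma semidirect_mul_comm:
  assumes "p \<in> Ag' a" "q \<in> Ag' b"
  shows "m' p q = sc' (eps a b) (m' q p)"
  using assms
proof (induction p rule: sum_grading_induct)
  case (pure p)
  from \<open>q \<in> Ag' b\<close> show ?case
    by (induction q rule: sum_grading_induct)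
      (simp_all add: pure semidirect_mul_comm_pure m'_distrib AV.scale_right_distrib)
qed (simp add: m'_distrib AV.scale_right_distrib)

lemma semidirect_br_skew_pure:
  "pure a p \<Longrightarrow> pure b q \<Longrightarrow> br' p q = - sc' (eps a b) (br' q p)"
proof -
  have AA: "br' (x, 0) (y, 0) = - sc' (eps a b) (br' (y, 0) (x, 0))" if "x \<in> Ag a" "y \<in> Ag b" for x y
    using br_skew[OF that] by (simp add: sum_scale_def)
  have AV: "br' (x, 0) (0, v) = - sc' (eps a b) (br' (0, v) (x, 0))" if "x \<in> Ag a" "v \<in> Vg b" for x v
    using semidirect_br_VA[OF that(2,1)] by (simp add: sum_scale_def eps_swap V.scale_minus_right)
  have VA: "br' (0, u) (y, 0) = - sc' (eps a b) (br' (y, 0) (0, u))" if "u \<in> Vg a" "y \<in> Ag b" for u y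
    using semidirect_br_VA[OF that] by (simp add: sum_scale_def)
  show "pure a p \<Longrightarrow> pure b q \<Longrightarrow> br' p q = - sc' (eps a b) (br' q p)"
    unfolding pure_def
    by (elim disjE bexE; simp only:; ((rule AA AV VA; assumption) | simp add: sum_scale_def))
qed

lemma semidirect_br_skew:
  assumes "p \<in> Ag' a" "q \<in> Ag' b"
  shows "br' p q = - sc' (eps a b) (br' q p)"
  using assms
proof (induction p rule: sum_grading_induct)
  case (pure p)
  from \<open>q \<in> Ag' b\<close> show ?case
    by (induction q rule: sum_grading_induct)
      (simp_all add: pure semidirect_br_skew_pure br'_distrib AV.scale_right_distrib)
qed (simp add: br'_distrib AV.scale_right_distrib)

lemma semidirect_br_jacobi_pure:
  "pure a p \<Longrightarrow> pure b q \<Longrightarrow> pure c r \<Longrightarrow> jacobiator sc' eps br' a b c p q r = 0"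
proof -
  have AAA: "jacobiator sc' eps br' a b c (x, 0) (y, 0) (z, 0) = 0"
    if "x \<in> Ag a" "y \<in> Ag b" "z \<in> Ag c" for x y z
    using br_jacobi[OF that] by (simp add: jacobiator_def sum_scale_def zero_prod_def)
  have AAV: "jacobiator sc' eps br' a b c (x, 0) (y, 0) (0, v) = 0"
    if x: "x \<in> Ag a" and y: "y \<in> Ag b" and v: "v \<in> Vg c" for x y v
  proof -
    have "eps b c * eps c (a + b) = eps c a"
      by (simp add: eps_add_right mult.left_commute[of "eps b c"] eps_swap)
    then show ?thesis
      by (simp add: jacobiator_def sum_scale_def twist_homogeneous[OF rho_linear br_grade[OF x y] v]
          twist_homogeneous[OF rho_linear x v] rho_br[OF x y] rho_distrib V.scale_right_diff_distrib
          mult.assoc[symmetric])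
        (simp add: mult.commute zero_prod_def)
  qed
  have AVA: "jacobiator sc' eps br' a b c (x, 0) (0, v) (z, 0) = 0"
    if x: "x \<in> Ag a" and v: "v \<in> Vg b" and z: "z \<in> Ag c" for x v z
  proof -
    have "eps a b * eps b (c + a) = eps b c"
      by (simp add: eps_add_right mult.left_commute[of "eps a b"] eps_swap)
    then show ?thesis
      by (simp add: jacobiator_def sum_scale_def twist_homogeneous[OF rho_linear z v]
          twist_homogeneous[OF rho_linear br_grade[OF z x] v] rho_br[OF z x] rho_distrib
          V.scale_right_diff_distrib mult.assoc[symmetric])
        (simp add: mult.commute zero_prod_def)
  qed
  have VAA: "jacobiator sc' eps br' a b c (0, u) (y, 0) (z, 0) = 0"
    if u: "u \<in> Vg a" and y: "y \<in> Ag b" and z: "z \<in> Ag c" for u y z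
  proof -
    have "eps c a * eps a (b + c) = eps a b"
      by (simp add: eps_add_right mult.left_commute[of "eps c a"] eps_swap)
    then show ?thesis
      by (simp add: jacobiator_def sum_scale_def twist_homogeneous[OF rho_linear br_grade[OF y z] u]
          twist_homogeneous[OF rho_linear y u] rho_br[OF y z] rho_distrib V.scale_right_diff_distrib
          mult.assoc[symmetric])
        (simp add: mult.commute zero_prod_def)
  qed
  show "pure a p \<Longrightarrow> pure b q \<Longrightarrow> pure c r \<Longrightarrow> jacobiator sc' eps br' a b c p q r = 0"
    unfolding pure_def
    by (elim disjE bexE; simp only:; ((rule AAA AAV AVA VAA; assumption) |
        simp add: jacobiator_def sum_scale_def rho_distrib br_distrib zero_prod_def))
qed

lemma semidirect_br_jacobi:
  assumes "p \<in> Ag' a" "q \<in> Ag' b" "r \<in> Ag' c"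
  shows "jacobiator sc' eps br' a b c p q r = 0"
  using assms
proof (induction p rule: sum_grading_induct)
  case (pure p)
  from \<open>q \<in> Ag' b\<close> \<open>r \<in> Ag' c\<close> show ?case
  proof (induction q rule: sum_grading_induct)
    case (pure q)
    from \<open>r \<in> Ag' c\<close> show ?case
      by (induction r rule: sum_grading_induct)
        (simp_all add: \<open>pure a p\<close> pure semidirect_br_jacobi_pure
          AV.jacobiator_add[OF bilinear_op_semidirect_br])
  qed (simp add: AV.jacobiator_add[OF bilinear_op_semidirect_br])
qed (simp add: AV.jacobiator_add[OF bilinear_op_semidirect_br])

lemma Pfun_semidirect_AAA:
  "Pfun sc' eps m' br' a b (x, 0) (y, 0) (w, 0) = (Pfun sc eps m br a b x y w, 0)"
  by (simp add: Pfun_def sum_scale_def)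

lemma Pfun_semidirect_AAV:
  "Pfun sc' eps m' br' a b (x, 0) (y, 0) (0, v) = (0, Rop scV eps br rho mu a b x y v)"
  by (simp add: Pfun_def Rop_def sum_scale_def)

lemma Pfun_semidirect_VAA:
  assumes u: "u \<in> Vg e" and z: "z \<in> Ag c" and w: "w \<in> Ag d"
  shows "Pfun sc' eps m' br' e c (0, u) (z, 0) (w, 0) =
    (0, scV (eps e (c + d)) (Sop scV eps m rho mu c d z w u))"
  by (simp add: Pfun_def Sop_def sum_scale_def twist_homogeneous[OF rho_linear m_grade[OF z w] u]
      twist_homogeneous[OF rho_linear z u] twist_homogeneous[OF rho_linear w u]
      twist_homogeneous[OF mu_linear w rho_grade[OF z u]] twist_linear[OF mu_linear]
      mu_distrib rho_distrib eps_add_left eps_add_right V.scale_right_distrib V.scale_right_diff_distrib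
      mult_ac algebra_simps)

lemma Pfun_semidirect_AVA:
  assumes y: "y \<in> Ag b" and u: "u \<in> Vg c" and w: "w \<in> Ag d"
  shows "Pfun sc' eps m' br' b c (y, 0) (0, u) (w, 0) =
    (0, scV (eps c d) (Rop scV eps br rho mu b d y w u))"
proof -
  have "eps b c * eps c (b + d) = eps c d"
    by (simp add: eps_add_right mult.assoc[symmetric] eps_swap)
  then show ?thesis
    by (simp add: Pfun_def Rop_def sum_scale_def twist_homogeneous[OF mu_linear w u]
        twist_homogeneous[OF mu_linear w rho_grade[OF y u]]
        twist_homogeneous[OF mu_linear br_grade[OF y w] u]
        twist_linear[OF mu_linear] mu_distrib rho_distrib)
      (simp add: eps_add_left eps_add_right V.scale_right_distrib V.scale_right_diff_distrib
        mult_ac algebra_simps)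
qed

lemma Pfun_grade:
  assumes "x \<in> Ag a" "y \<in> Ag b" "z \<in> Ag c"
  shows "Pfun sc eps m br a b x y z \<in> Ag (a + b + c)"
proof -
  have "br x (m y z) \<in> Ag (a + b + c)" "m (br x y) z \<in> Ag (a + b + c)" "m y (br x z) \<in> Ag (a + b + c)"
    using br_grade[OF assms(1) m_grade[OF assms(2,3)]] m_grade[OF br_grade[OF assms(1,2)] assms(3)]
      m_grade[OF assms(2) br_grade[OF assms(1,3)]]
    by (simp_all add: add_ac)
  then show ?thesis
    unfolding Pfun_def by (intro A.grade_diff A.grade_scale)
qed

lemma Sop_scale: "Sop scV eps m rho mu b c y z (scV k v) = scV k (Sop scV eps m rho mu b c y z v)"
  by (simp add: Sop_def mu_distrib rho_distrib V.scale_right_distrib V.scale_right_diff_distrib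
      V.scale_left_commute[of _ k])

lemma hertling_manin_pure:
  "pure a p \<Longrightarrow> pure b q \<Longrightarrow> pure c r \<Longrightarrow> pure d s \<Longrightarrow> hertling_manin sc' eps m' br' a b c p q r s"
proof -
  have AAAA: "hertling_manin sc' eps m' br' a b c (x, 0) (y, 0) (z, 0) (w, 0)"
    if "x \<in> Ag a" "y \<in> Ag b" "z \<in> Ag c" for x y z w
    using hertling_manin_algebra[OF that, of w]
    by (simp add: hertling_manin_def Pfun_semidirect_AAA sum_scale_def)
  have AAAV: "hertling_manin sc' eps m' br' a b c (x, 0) (y, 0) (z, 0) (0, v)"
    if "x \<in> Ag a" "y \<in> Ag b" "z \<in> Ag c" for x y z v
    using rep_R[OF that, of v]
    by (simp add: hertling_manin_def Pfun_semidirect_AAV sum_scale_def)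
  have AAVA: "hertling_manin sc' eps m' br' a b c (x, 0) (y, 0) (0, u) (w, 0)"
    if x: "x \<in> Ag a" and y: "y \<in> Ag b" and u: "u \<in> Vg c" and w: "w \<in> Ag d" for x y u w
    by (simp add: hertling_manin_def Pfun_semidirect_AVA[OF m_grade[OF x y] u w]
        Pfun_semidirect_AVA[OF y u w] Pfun_semidirect_AVA[OF x u w] rep_R[OF x y w] sum_scale_def
        mu_distrib V.scale_right_distrib mult.commute)
  have VAAA: "hertling_manin sc' eps m' br' a b c (0, u) (y, 0) (z, 0) (w, 0)"
    if u: "u \<in> Vg a" and y: "y \<in> Ag b" and z: "z \<in> Ag c" and w: "w \<in> Ag d" for u y z w
    using Pfun_semidirect_VAA[OF V.grade_scale[OF mu_grade[OF y u]] z w]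
    by (simp add: hertling_manin_def twist_homogeneous[OF mu_linear y u] Pfun_semidirect_AAA
        Pfun_semidirect_VAA[OF u z w] twist_homogeneous[OF mu_linear Pfun_grade[OF y z w] u]
        rep_P[OF y z w] Sop_scale sum_scale_def mu_distrib V.scale_right_distrib V.scale_right_diff_distrib
        eps_add_left eps_add_right mult_ac)
  have AVAA: "hertling_manin sc' eps m' br' a b c (x, 0) (0, u) (z, 0) (w, 0)"
    if x: "x \<in> Ag a" and u: "u \<in> Vg b" and z: "z \<in> Ag c" and w: "w \<in> Ag d" for x u z w
  proof -
    have "eps a b * eps b (a + c + d) = eps b (c + d)"
      by (simp add: eps_add_right mult.assoc[symmetric] eps_swap)
    then show ?thesis
      using Pfun_semidirect_VAA[OF mu_grade[OF x u, unfolded add.commute[of b a]] z w]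
      by (simp add: hertling_manin_def Pfun_semidirect_VAA[OF u z w] Pfun_semidirect_AAA
          twist_homogeneous[OF mu_linear Pfun_grade[OF x z w] u] rep_P[OF x z w] sum_scale_def
          mu_distrib V.scale_right_diff_distrib)
        (simp add: Sop_scale mu_distrib V.scale_right_distrib V.scale_right_diff_distrib eps_add_left
          eps_add_right mult_ac eps_swap)
  qed
  show "pure a p \<Longrightarrow> pure b q \<Longrightarrow> pure c r \<Longrightarrow> pure d s \<Longrightarrow> hertling_manin sc' eps m' br' a b c p q r s"
    unfolding pure_def
    by (elim disjE bexE; simp only:; ((rule AAAA AAAV AAVA VAAA AVAA; assumption) |
        simp add: hertling_manin_def Pfun_def sum_scale_def m_distrib br_distrib mu_distrib rho_distrib
          twist_linear[OF mu_linear] twist_linear[OF rho_linear]))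
qed

lemmas hertling_manin_semidirect_add =
  AV.hertling_manin_add[OF bilinear_op_semidirect_mul bilinear_op_semidirect_br]

lemma hertling_manin_semidirect:
  assumes "p \<in> Ag' a" "q \<in> Ag' b" "r \<in> Ag' c"
  shows "hertling_manin sc' eps m' br' a b c p q r s"
  using assms
proof (induction p rule: sum_grading_induct)
  case (pure p)
  from \<open>q \<in> Ag' b\<close> \<open>r \<in> Ag' c\<close> show ?case
  proof (induction q rule: sum_grading_induct)
    case (pure q)
    from \<open>r \<in> Ag' c\<close> show ?case
    proof (induction r rule: sum_grading_induct)
      case (pure r)
      show ?case
        by (induction s rule: pure_induct)
          (auto intro: hertling_manin_pure[OF \<open>pure a p\<close> \<open>pure b q\<close> pure] hertling_manin_semidirect_add
            AV.hertling_manin_zero[OF bilinear_op_semidirect_mul bilinear_op_semidirect_br])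
    qed (auto intro: hertling_manin_semidirect_add)
  qed (auto intro: hertling_manin_semidirect_add)
qed (auto intro: hertling_manin_semidirect_add)

theorem F_manifold_color_semidirect: "F_manifold_color sc' Ag' eps m' br'"
  by (rule F_manifold_colorI)
    (assumption | rule AV.graded_vs bilinear_op_semidirect_mul bilinear_op_semidirect_br
      graded_op_semidirect_mul graded_op_semidirect_br semidirect_mul_assoc semidirect_mul_comm
      semidirect_br_skew semidirect_br_jacobi hertling_manin_semidirect)+

end

theorem proposition3p5:
  fixes sc :: "'k::field_char_0 \<Rightarrow> 'a::ab_group_add \<Rightarrow> 'a"
    and scV :: "'k \<Rightarrow> 'v::ab_group_add \<Rightarrow> 'v"
    and Ag :: "'g::ab_group_add \<Rightarrow> 'a set"
    and Vg :: "'g \<Rightarrow> 'v set"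
    and eps :: "'g \<Rightarrow> 'g \<Rightarrow> 'k"
    and m br :: "'a \<Rightarrow> 'a \<Rightarrow> 'a"
    and rho mu :: "'a \<Rightarrow> 'v \<Rightarrow> 'v"
  assumes "alg_closed_field TYPE('k)"
    and "skew_bichar eps"
    and "fin_dim sc" and "fin_dim scV"
    and "F_manifold_color sc Ag eps m br"
    and "F_manifold_color_rep sc Ag eps m br scV Vg rho mu"
  shows "F_manifold_color (sum_scale sc scV) (sum_grading Ag Vg) eps
           (semidirect_mul scV Ag Vg eps m mu) (semidirect_br scV Ag Vg eps br rho)"
proof -
  have "graded_vs sc Ag"
    using assms(5) unfolding F_manifold_color_def eps_comm_assoc_def by blast
  moreover have "graded_vs scV Vg"
    using assms(6) unfolding F_manifold_color_rep_def by blast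
  ultimately interpret semidirect_product sc Ag scV Vg eps m br rho mu
    using assms(2,5,6) by unfold_locales
  show ?thesis
    by (rule F_manifold_color_semidirect)
qed

end
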